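(* Let $X$ be a continuum, let $n\geq 2$ be an integer, and let $f:X\to X$ be a map. Consider the statements: (1) $f$ is cofinitely sensitive; (2) $F_n(f)$ is cofinitely sensitive; (3) $SF_n(f)$ is cofinitely sensitive. Then (1) and (2) are equivalent, and (3) implies (2).
   Context: A continuum is a nonempty compact connected metric space $(X,d)$. For $n\in\mathbb{N}$, $F_n(X)$ is the set of nonempty subsets of $X$ with at most $n$ points, with the Hausdorff metric $d_H$; $F_1(X)=\{\{x\}:x\in X\}$. For $f:X\to X$, $F_n(f)(A)=f(A)$. For $n\geq 2$, $SF_n(X)=F_n(X)/F_1(X)$ (collapsing $F_1(X)$ to a point), $q:F_n(X)\to SF_n(X)$ the quotient map, $F_X=q(F_1(X))$, and $SF_n(f)(\chi)=q(F_n(f)(q^{-1}(\chi)))$ if $\chi\neq F_X$, $SF_n(f)(F_X)=F_X$. $SF_n(X)$ carries the metric $\rho(\chi_1,\chi_2)=\mathcal{H}^2(F_1(X)\cup q^{-1}(\chi_1),F_1(X)\cup q^{-1}(\chi_2))$, with $\mathcal{H}^2$ the Hausdorff metric on closed subsets of $F_n(X)$ induced by $d_H$. A map $g$ on a metric space $(Z,D)$ is cofinitely sensitive if there exist $\delta>0$ and $N\in\mathbb{N}$ such that for every nonempty open $U\subseteq Z$ and every $m>N$ there exist $x,y\in U$ with $D(g^m(x),g^m(y))>\delta$ (with $D=d,d_H,\rho$ for $f,F_n(f),SF_n(f)$). *)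

theory Defs
  imports "HOL-Analysis.Analysis"
begin

text \<open>Hausdorff distance between two nonempty compact subsets, induced by a
  distance function D (used only on nonempty compact sets, where Sup/Inf are
  the usual ones).\<close>
definition hdist :: "('b \<Rightarrow> 'b \<Rightarrow> real) \<Rightarrow> 'b set \<Rightarrow> 'b set \<Rightarrow> real" where
  "hdist D A B = max (SUP a\<in>A. INF b\<in>B. D a b) (SUP b\<in>B. INF a\<in>A. D a b)"

definition dH :: "'a::metric_space set \<Rightarrow> 'a set \<Rightarrow> real" where
  "dH A B = hdist dist A B"

definition Fn :: "nat \<Rightarrow> 'a set \<Rightarrow> 'a set set" where
  "Fn n X = {A. A \<subseteq> X \<and> A \<noteq> {} \<and> finite A \<and> card A \<le> n}"

definition F1 :: "'a set \<Rightarrow> 'a set set" where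
  "F1 X = {{x} | x. x \<in> X}"

text \<open>Quotient F_n(X)/F_1(X): the class of A is F_1(X) if A is a singleton,
  otherwise the singleton class {A}.  Thus q^{-1}(chi) = chi.\<close>
definition qmap :: "'a set \<Rightarrow> 'a set \<Rightarrow> 'a set set" where
  "qmap X A = (if A \<in> F1 X then F1 X else {A})"

definition SFn :: "nat \<Rightarrow> 'a set \<Rightarrow> 'a set set set" where
  "SFn n X = qmap X ` Fn n X"

definition rho :: "'a::metric_space set \<Rightarrow> 'a set set \<Rightarrow> 'a set set \<Rightarrow> real" where
  "rho X c1 c2 = hdist dH (F1 X \<union> c1) (F1 X \<union> c2)"

definition Fnf :: "('a \<Rightarrow> 'a) \<Rightarrow> 'a set \<Rightarrow> 'a set" where
  "Fnf f A = f ` A"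

definition SFnf :: "'a set \<Rightarrow> ('a \<Rightarrow> 'a) \<Rightarrow> 'a set set \<Rightarrow> 'a set set" where
  "SFnf X f c = (if c = F1 X then F1 X else qmap X (Fnf f (\<Union>c)))"

definition D_open :: "'b set \<Rightarrow> ('b \<Rightarrow> 'b \<Rightarrow> real) \<Rightarrow> 'b set \<Rightarrow> bool" where
  "D_open Z D U \<longleftrightarrow> U \<subseteq> Z \<and> (\<forall>x\<in>U. \<exists>e>0. \<forall>y\<in>Z. D x y < e \<longrightarrow> y \<in> U)"

definition cofinitely_sensitive :: "'b set \<Rightarrow> ('b \<Rightarrow> 'b \<Rightarrow> real) \<Rightarrow> ('b \<Rightarrow> 'b) \<Rightarrow> bool" where
  "cofinitely_sensitive Z D g \<longleftrightarrow>
     (\<exists>\<delta>>0. \<exists>N::nat. \<forall>U. D_open Z D U \<and> U \<noteq> {} \<longrightarrow>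
        (\<forall>m>N. \<exists>x\<in>U. \<exists>y\<in>U. D ((g ^^ m) x) ((g ^^ m) y) > \<delta>))"

end

theory Submission
  imports Defs
begin

text \<open>
  (1) \<Rightarrow> (2): given A in an open set U of F_n(X) and m > N, fix p = f^m(a) for some a \<in> A and
  move every point of A to a nearby point whose m-th image is far from p; the perturbed set B
  stays in U, and p is far from all of f^m(B).
  (2) \<Rightarrow> (1): the finite subsets of an open V \<subseteq> X form an open subset of F_n(X), and two such
  sets with Hausdorff-distant images contain two points of V with distant images.
  (3) \<Rightarrow> (2): the quotient map q is a non-expanding semiconjugacy from F_n(f) to SF_n(f), and
  the image of every nonempty open set of F_n(X) contains a nonempty open set of SF_n(X);
  for the latter, connectedness guarantees that open sets contain non-singletons, whose
  classes are isolated from F_X.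
\<close>

lemma dH_finite:
  assumes "finite A" "A \<noteq> {}" "finite B" "B \<noteq> {}"
  shows "dH A B = max (Max ((\<lambda>a. Min ((\<lambda>b. dist a b) ` B)) ` A))
                      (Max ((\<lambda>b. Min ((\<lambda>a. dist a b) ` A)) ` B))"
  using assms by (simp add: dH_def hdist_def cSup_eq_Max cInf_eq_Min)

lemma dH_less:
  assumes "finite A" "A \<noteq> {}" "finite B" "B \<noteq> {}"
    and "\<forall>a\<in>A. \<exists>b\<in>B. dist a b < e" and "\<forall>b\<in>B. \<exists>a\<in>A. dist a b < e"
  shows "dH A B < e"
  using assms by (simp add: dH_finite Min_less_iff)

lemma dH_lessD:
  assumes "finite A" "A \<noteq> {}" "finite B" "B \<noteq> {}" "dH A B < e" "b \<in> B"
  shows "\<exists>a\<in>A. dist a b < e"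
  using assms by (simp add: dH_finite Min_less_iff)

lemma dH_greaterD:
  assumes "finite A" "A \<noteq> {}" "finite B" "B \<noteq> {}" "e < dH A B"
  shows "(\<exists>a\<in>A. \<forall>b\<in>B. e < dist a b) \<or> (\<exists>b\<in>B. \<forall>a\<in>A. e < dist a b)"
  using assms by (simp add: dH_finite less_max_iff_disj Max_gr_iff Min_gr_iff)

lemma dH_geI:
  assumes "finite A" "A \<noteq> {}" "finite B" "B \<noteq> {}" "a \<in> A" "\<forall>b\<in>B. c \<le> dist a b"
  shows "c \<le> dH A B"
  using assms by (simp add: dH_finite le_max_iff_disj Max_ge_iff) blast

lemma dH_greaterI:
  assumes "finite A" "A \<noteq> {}" "finite B" "B \<noteq> {}" "a \<in> A" "\<forall>b\<in>B. c < dist a b"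
  shows "c < dH A B"
  using assms by (simp add: dH_finite less_max_iff_disj Max_gr_iff) blast

lemma dH_nonneg:
  assumes "finite A" "A \<noteq> {}" "finite B" "B \<noteq> {}"
  shows "0 \<le> dH A B"
  using assms dH_geI[OF assms] by (meson equals0I zero_le_dist)

lemma dH_self:
  assumes "finite A" "A \<noteq> {}"
  shows "dH A A = 0"
  using dH_greaterD[OF assms assms, of 0] dH_nonneg[OF assms assms] by force

lemma dH_singleton_ge:
  assumes "finite B" "b1 \<in> B" "b2 \<in> B"
  shows "dist b1 b2 / 2 \<le> dH B {x}"
proof -
  have "dist b1 x \<le> dH B {x}" "dist b2 x \<le> dH B {x}"
    using assms by (auto intro: dH_geI)
  moreover have "dist b1 b2 \<le> dist b1 x + dist b2 x"
    by (rule dist_triangle2)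
  ultimately show ?thesis by linarith
qed

lemma hdist_le:
  assumes "A \<noteq> {}" "B \<noteq> {}" "\<forall>a\<in>A. \<forall>b\<in>B. 0 \<le> D a b"
    and "\<forall>a\<in>A. \<exists>b\<in>B. D a b \<le> e" and "\<forall>b\<in>B. \<exists>a\<in>A. D a b \<le> e"
  shows "hdist D A B \<le> e"
proof -
  have "(INF b\<in>B. D a b) \<le> e" if "a \<in> A" for a
  proof -
    obtain b where "b \<in> B" "D a b \<le> e" using assms(4) \<open>a \<in> A\<close> by blast
    moreover have "bdd_below ((\<lambda>b. D a b) ` B)"
      using assms(3) \<open>a \<in> A\<close> by (intro bdd_belowI2) blast
    ultimately show ?thesis by (meson cINF_lower order_trans)
  qed
  moreover have "(INF a\<in>A. D a b) \<le> e" if "b \<in> B" for b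
  proof -
    obtain a where "a \<in> A" "D a b \<le> e" using assms(5) \<open>b \<in> B\<close> by blast
    moreover have "bdd_below ((\<lambda>a. D a b) ` A)"
      using assms(3) \<open>b \<in> B\<close> by (intro bdd_belowI2) blast
    ultimately show ?thesis by (meson cINF_lower order_trans)
  qed
  ultimately show ?thesis
    using assms(1,2) by (simp add: hdist_def cSUP_least)
qed

lemma INF_le_hdist:
  assumes "a \<in> A" "\<forall>a\<in>A. \<forall>b\<in>B. 0 \<le> D a b" "\<forall>a\<in>A. \<exists>b\<in>B. D a b \<le> c"
  shows "(INF b\<in>B. D a b) \<le> hdist D A B"
proof -
  have "(INF b\<in>B. D a' b) \<le> c" if "a' \<in> A" for a'
  proof -
    obtain b where "b \<in> B" "D a' b \<le> c" using assms(3) \<open>a' \<in> A\<close> by blast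
    moreover have "bdd_below ((\<lambda>b. D a' b) ` B)"
      using assms(2) \<open>a' \<in> A\<close> by (intro bdd_belowI2) blast
    ultimately show ?thesis by (meson cINF_lower order_trans)
  qed
  then have "bdd_above ((\<lambda>a. INF b\<in>B. D a b) ` A)"
    by (intro bdd_aboveI2)
  have "(INF b\<in>B. D a b) \<le> (SUP a\<in>A. INF b\<in>B. D a b)"
    using assms(1) by (rule cSUP_upper[OF _ \<open>bdd_above _\<close>])
  then show ?thesis
    by (simp add: hdist_def le_max_iff_disj)
qed

subsection \<open>Sensitivity of f and of F_n(f)\<close>

definition sensitive_with :: "'b set \<Rightarrow> ('b \<Rightarrow> 'b \<Rightarrow> real) \<Rightarrow> ('b \<Rightarrow> 'b) \<Rightarrow> real \<Rightarrow> nat \<Rightarrow> bool" where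
  "sensitive_with Z D g \<delta> N \<longleftrightarrow>
     (\<forall>U. D_open Z D U \<and> U \<noteq> {} \<longrightarrow> (\<forall>m>N. \<exists>x\<in>U. \<exists>y\<in>U. \<delta> < D ((g ^^ m) x) ((g ^^ m) y)))"

lemma cofinitely_sensitive_iff_sensitive_with:
  "cofinitely_sensitive Z D g \<longleftrightarrow> (\<exists>\<delta>>0. \<exists>N. sensitive_with Z D g \<delta> N)"
  by (simp add: cofinitely_sensitive_def sensitive_with_def)

lemma sensitive_withD:
  assumes "sensitive_with Z D g \<delta> N" "D_open Z D U" "U \<noteq> {}" "N < m"
  obtains x y where "x \<in> U" "y \<in> U" "\<delta> < D ((g ^^ m) x) ((g ^^ m) y)"
  using assms unfolding sensitive_with_def by blast

lemma D_open_ball: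
  assumes "a \<in> X"
  shows "D_open X dist {y\<in>X. dist a y < e}"
  unfolding D_open_def
proof (intro conjI ballI)
  fix y assume y: "y \<in> {y\<in>X. dist a y < e}"
  show "\<exists>e'>0. \<forall>w\<in>X. dist y w < e' \<longrightarrow> w \<in> {y\<in>X. dist a y < e}"
  proof (intro exI[of _ "e - dist a y"] conjI ballI impI)
    show "0 < e - dist a y" using y by simp
    fix w assume "w \<in> X" "dist y w < e - dist a y"
    then show "w \<in> {y\<in>X. dist a y < e}" using dist_triangle[of a w y] by simp
  qed
qed auto

text \<open>Whichever of two points with distant images lies farther from p will do.\<close>
lemma sensitive_with_far_point:
  assumes "sensitive_with X dist f \<delta> N" "N < m" "a \<in> X" "0 < \<epsilon>"
  obtains z where "z \<in> X" "dist a z < \<epsilon>" "\<delta> / 2 < dist p ((f ^^ m) z)"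
proof -
  obtain x y where xy: "x \<in> X" "dist a x < \<epsilon>" "y \<in> X" "dist a y < \<epsilon>"
      "\<delta> < dist ((f ^^ m) x) ((f ^^ m) y)"
    using sensitive_withD[OF assms(1) D_open_ball[OF assms(3)] _ assms(2), of \<epsilon>] assms(3,4)
    by force
  have "dist ((f ^^ m) x) ((f ^^ m) y) \<le> dist p ((f ^^ m) x) + dist p ((f ^^ m) y)"
    by (rule dist_triangle3)
  then have "\<delta> / 2 < dist p ((f ^^ m) x) \<or> \<delta> / 2 < dist p ((f ^^ m) y)"
    using xy(5) by linarith
  then show ?thesis
    using that xy by blast
qed

lemma Fnf_funpow: "(Fnf f ^^ m) A = (f ^^ m) ` A"
  by (induction m arbitrary: A) (auto simp: Fnf_def image_comp)

lemma FnD: "A \<in> Fn n X \<Longrightarrow> finite A \<and> A \<noteq> {} \<and> A \<subseteq> X \<and> card A \<le> n"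
  by (simp add: Fn_def)

lemma D_openD:
  assumes "D_open Z D U" "x \<in> U"
  obtains e where "0 < e" "\<And>y. y \<in> Z \<Longrightarrow> D x y < e \<Longrightarrow> y \<in> U"
  using assms unfolding D_open_def by blast

lemma Fn_image_near:
  assumes "A \<in> Fn n X" "\<forall>a\<in>A. g a \<in> X \<and> dist a (g a) < \<epsilon>"
  shows "g ` A \<in> Fn n X" "dH A (g ` A) < \<epsilon>"
proof -
  have A: "finite A" "A \<noteq> {}" "A \<subseteq> X" "card A \<le> n"
    using FnD[OF assms(1)] by auto
  then show "g ` A \<in> Fn n X"
    using assms(2) card_image_le[of A g] by (auto simp: Fn_def)
  show "dH A (g ` A) < \<epsilon>"
    using A assms(2) by (intro dH_less) auto
qed

lemma sensitive_with_Fn: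
  assumes "sensitive_with X dist f \<delta> N"
  shows "sensitive_with (Fn n X) dH (Fnf f) (\<delta> / 2) N"
  unfolding sensitive_with_def
proof (intro allI impI)
  fix U m assume U: "D_open (Fn n X) dH U \<and> U \<noteq> {}" and "N < m"
  obtain A where "A \<in> U" using U by blast
  obtain \<epsilon> where "0 < \<epsilon>" and \<epsilon>: "\<And>B. B \<in> Fn n X \<Longrightarrow> dH A B < \<epsilon> \<Longrightarrow> B \<in> U"
    by (rule D_openD[OF conjunct1[OF U] \<open>A \<in> U\<close>]) blast
  have A: "A \<in> Fn n X" "finite A" "A \<noteq> {}" "A \<subseteq> X"
    using U \<open>A \<in> U\<close> FnD by (auto simp: D_open_def)
  then obtain a0 where "a0 \<in> A" by blast
  define p where "p = (f ^^ m) a0"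
  have "\<forall>a\<in>A. \<exists>z. z \<in> X \<and> dist a z < \<epsilon> \<and> \<delta> / 2 < dist p ((f ^^ m) z)"
  proof
    fix a assume "a \<in> A"
    then have "a \<in> X" using A(4) by blast
    then show "\<exists>z. z \<in> X \<and> dist a z < \<epsilon> \<and> \<delta> / 2 < dist p ((f ^^ m) z)"
      by (meson sensitive_with_far_point[OF assms \<open>N < m\<close> _ \<open>0 < \<epsilon>\<close>])
  qed
  then obtain z where z: "\<forall>a\<in>A. z a \<in> X \<and> dist a (z a) < \<epsilon> \<and> \<delta> / 2 < dist p ((f ^^ m) (z a))"
    by metis
  then have B: "z ` A \<in> Fn n X" "z ` A \<in> U"
    using Fn_image_near[OF A(1)] \<epsilon> by blast+
  have "\<delta> / 2 < dH ((f ^^ m) ` A) ((f ^^ m) ` z ` A)"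
    using A B(1) \<open>a0 \<in> A\<close> z FnD by (intro dH_greaterI[of _ _ p]) (auto simp: p_def)
  then show "\<exists>x\<in>U. \<exists>y\<in>U. \<delta> / 2 < dH ((Fnf f ^^ m) x) ((Fnf f ^^ m) y)"
    using \<open>A \<in> U\<close> B(2) by (auto simp: Fnf_funpow)
qed

lemma D_open_Fn_subsets:
  assumes "D_open X dist V"
  shows "D_open (Fn n X) dH {B\<in>Fn n X. B \<subseteq> V}"
  unfolding D_open_def
proof (intro conjI ballI)
  fix B assume "B \<in> {B\<in>Fn n X. B \<subseteq> V}"
  then have B: "finite B" "B \<noteq> {}" "B \<subseteq> V"
    using FnD by auto
  have "\<forall>b\<in>B. \<exists>e>0. \<forall>y\<in>X. dist b y < e \<longrightarrow> y \<in> V"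
    using assms B(3) unfolding D_open_def by blast
  then obtain e where e: "\<forall>b\<in>B. 0 < e b \<and> (\<forall>y\<in>X. dist b y < e b \<longrightarrow> y \<in> V)"
    by metis
  show "\<exists>\<epsilon>>0. \<forall>C\<in>Fn n X. dH B C < \<epsilon> \<longrightarrow> C \<in> {B\<in>Fn n X. B \<subseteq> V}"
  proof (intro exI[of _ "Min (e ` B)"] conjI ballI impI)
    show "0 < Min (e ` B)"
      using e B by simp
    fix C assume C: "C \<in> Fn n X" "dH B C < Min (e ` B)"
    have "c \<in> V" if "c \<in> C" for c
    proof -
      obtain b where "b \<in> B" "dist b c < Min (e ` B)"
        using dH_lessD[OF B(1,2) _ _ C(2) \<open>c \<in> C\<close>] FnD[OF C(1)] by blast
      moreover have "Min (e ` B) \<le> e b"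
        using \<open>b \<in> B\<close> B(1) by simp
      ultimately show ?thesis
        using e \<open>c \<in> C\<close> FnD[OF C(1)] by fastforce
    qed
    then show "C \<in> {B\<in>Fn n X. B \<subseteq> V}"
      using C(1) by blast
  qed
qed auto

lemma sensitive_with_of_Fn:
  assumes "sensitive_with (Fn n X) dH (Fnf f) \<delta> N" "1 \<le> n"
  shows "sensitive_with X dist f \<delta> N"
  unfolding sensitive_with_def
proof (intro allI impI)
  fix V m assume V: "D_open X dist V \<and> V \<noteq> {}" and "N < m"
  then obtain v where "v \<in> V" by blast
  then have "{v} \<in> {B\<in>Fn n X. B \<subseteq> V}"
    using V assms(2) by (auto simp: Fn_def D_open_def)
  then obtain B1 B2 where "B1 \<in> {B\<in>Fn n X. B \<subseteq> V}" "B2 \<in> {B\<in>Fn n X. B \<subseteq> V}"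
      "\<delta> < dH ((Fnf f ^^ m) B1) ((Fnf f ^^ m) B2)"
    using sensitive_withD[OF assms(1) D_open_Fn_subsets[OF conjunct1[OF V]] _ \<open>N < m\<close>]
    by blast
  then have B: "B1 \<in> Fn n X" "B1 \<subseteq> V" "B2 \<in> Fn n X" "B2 \<subseteq> V"
      "\<delta> < dH ((f ^^ m) ` B1) ((f ^^ m) ` B2)"
    by (auto simp: Fnf_funpow)
  then have "(\<exists>x\<in>B1. \<forall>y\<in>B2. \<delta> < dist ((f ^^ m) x) ((f ^^ m) y))
           \<or> (\<exists>y\<in>B2. \<forall>x\<in>B1. \<delta> < dist ((f ^^ m) x) ((f ^^ m) y))"
    using dH_greaterD[OF _ _ _ _ B(5)] FnD[OF B(1)] FnD[OF B(3)] by auto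
  moreover obtain b1 b2 where "b1 \<in> B1" "b2 \<in> B2"
    using FnD[OF B(1)] FnD[OF B(3)] by blast
  ultimately show "\<exists>x\<in>V. \<exists>y\<in>V. \<delta> < dist ((f ^^ m) x) ((f ^^ m) y)"
    using B(2,4) by blast
qed

subsection \<open>Non-expanding semiconjugacies\<close>

lemma funpow_semiconj:
  assumes "g ` Z \<subseteq> Z" "\<forall>x\<in>Z. h (g x) = g' (h x)" "x \<in> Z"
  shows "(g ^^ m) x \<in> Z \<and> h ((g ^^ m) x) = (g' ^^ m) (h x)"
  using assms by (induction m) auto

lemma sensitive_with_of_semiconj:
  assumes "sensitive_with Z' D' g' \<delta> N"
    and "g ` Z \<subseteq> Z" "\<forall>x\<in>Z. h (g x) = g' (h x)"
    and "\<forall>x\<in>Z. \<forall>y\<in>Z. D' (h x) (h y) \<le> D x y"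
    and "\<forall>U. D_open Z D U \<and> U \<noteq> {} \<longrightarrow> (\<exists>W. D_open Z' D' W \<and> W \<noteq> {} \<and> W \<subseteq> h ` U)"
  shows "sensitive_with Z D g \<delta> N"
  unfolding sensitive_with_def
proof (intro allI impI)
  fix U m assume U: "D_open Z D U \<and> U \<noteq> {}" and "N < m"
  then obtain W where W: "D_open Z' D' W" "W \<noteq> {}" "W \<subseteq> h ` U"
    using assms(5) by blast
  obtain x' y' where "x' \<in> W" "y' \<in> W" "\<delta> < D' ((g' ^^ m) x') ((g' ^^ m) y')"
    using sensitive_withD[OF assms(1) W(1,2) \<open>N < m\<close>] by blast
  then obtain x y where xy: "x \<in> U" "y \<in> U" "\<delta> < D' ((g' ^^ m) (h x)) ((g' ^^ m) (h y))"
    using W(3) by blast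
  then have "x \<in> Z" "y \<in> Z"
    using U by (auto simp: D_open_def)
  then have "D' ((g' ^^ m) (h x)) ((g' ^^ m) (h y)) \<le> D ((g ^^ m) x) ((g ^^ m) y)"
    using funpow_semiconj[OF assms(2,3)] assms(4) by metis
  then show "\<exists>x\<in>U. \<exists>y\<in>U. \<delta> < D ((g ^^ m) x) ((g ^^ m) y)"
    using xy by force
qed

subsection \<open>The quotient map from F_n(X) to SF_n(X)\<close>

lemma F1_iff: "A \<in> F1 X \<longleftrightarrow> (\<exists>x\<in>X. A = {x})"
  by (auto simp: F1_def)

lemma qmap_eq_singleton: "A \<notin> F1 X \<Longrightarrow> qmap X A = {A}"
  by (simp add: qmap_def)

lemma F1_Un_qmap: "F1 X \<union> qmap X A = insert A (F1 X)"
  by (auto simp: qmap_def)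

lemma Fnf_Fn: "f ` X \<subseteq> X \<Longrightarrow> A \<in> Fn n X \<Longrightarrow> Fnf f A \<in> Fn n X"
  using card_image_le[of A f] by (auto simp: Fn_def Fnf_def)

lemma SFnf_qmap:
  assumes "f ` X \<subseteq> X" "A \<subseteq> X"
  shows "SFnf X f (qmap X A) = qmap X (Fnf f A)"
proof (cases "A \<in> F1 X")
  case True
  then have "Fnf f A \<in> F1 X"
    using assms(1) by (auto simp: F1_iff Fnf_def)
  then show ?thesis
    using True by (simp add: qmap_def SFnf_def)
next
  case False
  then have "{A} \<noteq> F1 X"
    by blast
  then show ?thesis
    using False by (simp add: qmap_def SFnf_def)
qed

lemma hdist_insert_le:
  assumes "\<forall>a\<in>insert p S. \<forall>b\<in>insert q S. 0 \<le> D a b" "\<forall>a\<in>S. D a a = 0"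
  shows "hdist D (insert p S) (insert q S) \<le> D p q"
  using assms by (intro hdist_le) force+

lemma dH_F1_self: "Y \<in> F1 X \<Longrightarrow> dH Y Y = 0"
  by (auto simp: F1_def intro: dH_self)

lemma dH_nonneg_F1:
  assumes "finite P" "P \<noteq> {}" "finite Q" "Q \<noteq> {}"
  shows "\<forall>A\<in>insert P (F1 X). \<forall>B\<in>insert Q (F1 X). 0 \<le> dH A B"
  using assms by (auto simp: F1_def intro: dH_nonneg)

lemma rho_qmap_le:
  assumes "finite P" "P \<noteq> {}" "finite Q" "Q \<noteq> {}"
  shows "rho X (qmap X P) (qmap X Q) \<le> dH P Q"
  unfolding rho_def F1_Un_qmap
  using dH_nonneg_F1[OF assms] dH_F1_self by (intro hdist_insert_le) auto

text \<open>The class of a set with two points b1, b2 is at rho-distance at least dist b1 b2 / 2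
  from F_X, so near it rho is controlled by the Hausdorff distance of representatives.\<close>
lemma rho_singleton_less:
  assumes "finite B" "b1 \<in> B" "b2 \<in> B" "finite C" "C \<noteq> {}"
    and "rho X {B} (qmap X C) < e" "e \<le> dist b1 b2 / 2"
  shows "C \<notin> F1 X" "dH B C < e"
proof -
  have B: "finite B" "B \<noteq> {}"
    using assms(1,2) by auto
  have nonneg: "\<forall>A\<in>insert B (F1 X). \<forall>A'\<in>insert C (F1 X). 0 \<le> dH A A'"
    using dH_nonneg_F1[OF B assms(4,5)] .
  have "\<forall>A\<in>insert B (F1 X). \<exists>A'\<in>insert C (F1 X). dH A A' \<le> dH B C"
    using nonneg dH_F1_self by force
  from INF_le_hdist[OF insertI1 nonneg this]
  have "(INF A\<in>insert C (F1 X). dH B A) \<le> rho X {B} (qmap X C)"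
    by (simp add: rho_def F1_Un_qmap)
  then have "(INF A\<in>insert C (F1 X). dH B A) < e"
    using assms(6) by linarith
  moreover have "bdd_below ((\<lambda>A. dH B A) ` insert C (F1 X))"
    using nonneg by (intro bdd_belowI2) blast
  ultimately obtain Y where Y: "Y \<in> insert C (F1 X)" "dH B Y < e"
    by (auto simp: cInf_less_iff)
  moreover have "Y \<notin> F1 X"
  proof
    assume "Y \<in> F1 X"
    then obtain x where "Y = {x}"
      by (auto simp: F1_def)
    then show False
      using Y(2) dH_singleton_ge[OF assms(1-3), of x] assms(7) by simp
  qed
  ultimately have "Y = C"
    by blast
  then show "C \<notin> F1 X" "dH B C < e"
    using Y \<open>Y \<notin> F1 X\<close> by auto
qed

lemma two_points_notin_F1:
  assumes "B \<subseteq> X" "B \<noteq> {}" "B \<notin> F1 X"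
  obtains b1 b2 where "b1 \<in> B" "b2 \<in> B" "b1 \<noteq> b2"
proof -
  obtain b where "b \<in> B"
    using assms(2) by blast
  moreover have "B \<noteq> {b}"
    using assms(1,3) \<open>b \<in> B\<close> by (auto simp: F1_def)
  ultimately show ?thesis
    using that by blast
qed

lemma D_open_nonsingleton_classes:
  assumes "D_open (Fn n X) dH U"
  shows "D_open (SFn n X) (rho X) ((\<lambda>B. {B}) ` (U - F1 X))"
  unfolding D_open_def
proof (intro conjI ballI)
  have "U \<subseteq> Fn n X"
    using assms by (simp add: D_open_def)
  then show "(\<lambda>B. {B}) ` (U - F1 X) \<subseteq> SFn n X"
    by (auto simp: SFn_def qmap_eq_singleton[symmetric])
  fix c assume "c \<in> (\<lambda>B. {B}) ` (U - F1 X)"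
  then obtain B where B: "c = {B}" "B \<in> U" "B \<notin> F1 X"
    by blast
  then have "B \<in> Fn n X"
    using \<open>U \<subseteq> Fn n X\<close> by blast
  then obtain b1 b2 where b: "b1 \<in> B" "b2 \<in> B" "b1 \<noteq> b2"
    using B(3) FnD by (metis two_points_notin_F1)
  obtain \<epsilon> where "0 < \<epsilon>" and \<epsilon>: "\<And>C. C \<in> Fn n X \<Longrightarrow> dH B C < \<epsilon> \<Longrightarrow> C \<in> U"
    by (rule D_openD[OF assms B(2)]) blast
  show "\<exists>e>0. \<forall>c'\<in>SFn n X. rho X c c' < e \<longrightarrow> c' \<in> (\<lambda>B. {B}) ` (U - F1 X)"
  proof (intro exI[of _ "min \<epsilon> (dist b1 b2 / 2)"] conjI ballI impI)
    show "0 < min \<epsilon> (dist b1 b2 / 2)"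
      using \<open>0 < \<epsilon>\<close> b(3) by simp
    fix c' assume c': "c' \<in> SFn n X" "rho X c c' < min \<epsilon> (dist b1 b2 / 2)"
    then obtain C where C: "C \<in> Fn n X" "c' = qmap X C"
      by (auto simp: SFn_def)
    have r: "rho X {B} (qmap X C) < min \<epsilon> (dist b1 b2 / 2)"
      using c' C B(1) by simp
    have fin: "finite B" "finite C" "C \<noteq> {}"
      using FnD \<open>B \<in> Fn n X\<close> C(1) by blast+
    have "C \<notin> F1 X" "dH B C < min \<epsilon> (dist b1 b2 / 2)"
      using rho_singleton_less[OF fin(1) b(1,2) fin(2,3) r min.cobounded2] by blast+
    then show "c' \<in> (\<lambda>B. {B}) ` (U - F1 X)"
      using \<epsilon> C by (auto simp: qmap_eq_singleton)
  qed
qed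

text \<open>A singleton {a} is approximated by doubletons {a, b}, as a is not isolated in X.\<close>
lemma D_open_Fn_meets_nonsingletons:
  assumes "connected X" "\<And>x. X \<noteq> {x}" "2 \<le> n" "D_open (Fn n X) dH U" "A \<in> U"
  obtains B where "B \<in> U" "B \<notin> F1 X"
proof (cases "A \<in> F1 X")
  case True
  then obtain a where "a \<in> X" "A = {a}"
    by (auto simp: F1_iff)
  obtain \<epsilon> where "0 < \<epsilon>" and \<epsilon>: "\<And>B. B \<in> Fn n X \<Longrightarrow> dH A B < \<epsilon> \<Longrightarrow> B \<in> U"
    by (rule D_openD[OF assms(4,5)]) blast
  have "a islimpt X"
    using connected_imp_perfect[OF assms(1) \<open>a \<in> X\<close> assms(2)] .
  then obtain b where "b \<in> X" "b \<noteq> a" "dist b a < \<epsilon>"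
    using \<open>0 < \<epsilon>\<close> islimpt_approachable by blast
  have "{a, b} \<in> Fn n X"
    using assms(3) \<open>a \<in> X\<close> \<open>b \<in> X\<close> \<open>b \<noteq> a\<close> by (simp add: Fn_def)
  moreover have "dH A {a, b} < \<epsilon>"
    unfolding \<open>A = {a}\<close> using \<open>dist b a < \<epsilon>\<close> \<open>0 < \<epsilon>\<close>
    by (intro dH_less) (auto simp: dist_commute)
  moreover have "{a, b} \<notin> F1 X"
    using \<open>b \<noteq> a\<close> by (auto simp: F1_def doubleton_eq_iff)
  ultimately show ?thesis
    using that \<epsilon> by blast
qed (use assms(5) that in blast)

lemma SFn_open_in_qmap_image:
  assumes "connected X" "2 \<le> n" "D_open (Fn n X) dH U" "U \<noteq> {}"
  shows "\<exists>W. D_open (SFn n X) (rho X) W \<and> W \<noteq> {} \<and> W \<subseteq> qmap X ` U"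
proof (cases "\<exists>x. X = {x}")
  case True
  then obtain x where "X = {x}"
    by blast
  then have "Fn n X \<subseteq> {{x}}"
    by (auto simp: Fn_def subset_singleton_iff)
  moreover have "U \<subseteq> Fn n X"
    using assms(3) by (simp add: D_open_def)
  ultimately have "U = Fn n X"
    using assms(4) by blast
  then have "qmap X ` U = SFn n X"
    by (simp add: SFn_def)
  moreover have "D_open (SFn n X) (rho X) (SFn n X)"
    unfolding D_open_def using zero_less_one by blast
  ultimately show ?thesis
    using assms(4) by auto
next
  case False
  obtain A where "A \<in> U"
    using assms(4) by blast
  then obtain B where "B \<in> U" "B \<notin> F1 X"
    using D_open_Fn_meets_nonsingletons[OF assms(1) _ assms(2,3)] False by blast
  then have "(\<lambda>B. {B}) ` (U - F1 X) \<noteq> {}" "(\<lambda>B. {B}) ` (U - F1 X) \<subseteq> qmap X ` U"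
    by (auto simp: qmap_eq_singleton[symmetric])
  then show ?thesis
    using D_open_nonsingleton_classes[OF assms(3)] by blast
qed

lemma sensitive_with_of_SFn:
  assumes "sensitive_with (SFn n X) (rho X) (SFnf X f) \<delta> N" "connected X" "f ` X \<subseteq> X" "2 \<le> n"
  shows "sensitive_with (Fn n X) dH (Fnf f) \<delta> N"
  using assms(1)
proof (rule sensitive_with_of_semiconj)
  show "Fnf f ` Fn n X \<subseteq> Fn n X"
    using Fnf_Fn[OF assms(3)] by blast
  show "\<forall>A\<in>Fn n X. qmap X (Fnf f A) = SFnf X f (qmap X A)"
    by (simp add: Fn_def SFnf_qmap[OF assms(3)])
  show "\<forall>A\<in>Fn n X. \<forall>B\<in>Fn n X. rho X (qmap X A) (qmap X B) \<le> dH A B"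
    by (simp add: Fn_def rho_qmap_le)
  show "\<forall>U. D_open (Fn n X) dH U \<and> U \<noteq> {} \<longrightarrow>
      (\<exists>W. D_open (SFn n X) (rho X) W \<and> W \<noteq> {} \<and> W \<subseteq> qmap X ` U)"
    using SFn_open_in_qmap_image[OF assms(2,4)] by blast
qed

theorem theorem2:
  fixes X :: "'a::metric_space set" and f :: "'a \<Rightarrow> 'a" and n :: nat
  assumes "compact X" and "connected X" and "X \<noteq> {}"
    and "continuous_on X f" and "f ` X \<subseteq> X"
    and "n \<ge> 2"
  shows "(cofinitely_sensitive X dist f \<longleftrightarrow> cofinitely_sensitive (Fn n X) dH (Fnf f))
       \<and> (cofinitely_sensitive (SFn n X) (rho X) (SFnf X f)
            \<longrightarrow> cofinitely_sensitive (Fn n X) dH (Fnf f))"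
proof (intro conjI iffI impI)
  assume "cofinitely_sensitive X dist f"
  then obtain \<delta> N where "0 < \<delta>" "sensitive_with X dist f \<delta> N"
    by (auto simp: cofinitely_sensitive_iff_sensitive_with)
  then have "0 < \<delta> / 2" "sensitive_with (Fn n X) dH (Fnf f) (\<delta> / 2) N"
    using sensitive_with_Fn by auto
  then show "cofinitely_sensitive (Fn n X) dH (Fnf f)"
    unfolding cofinitely_sensitive_iff_sensitive_with by blast
next
  assume "cofinitely_sensitive (Fn n X) dH (Fnf f)"
  then obtain \<delta> N where "0 < \<delta>" "sensitive_with (Fn n X) dH (Fnf f) \<delta> N"
    by (auto simp: cofinitely_sensitive_iff_sensitive_with)
  moreover have "1 \<le> n"
    using \<open>n \<ge> 2\<close> by simp
  ultimately have "sensitive_with X dist f \<delta> N"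
    using sensitive_with_of_Fn by blast
  then show "cofinitely_sensitive X dist f"
    unfolding cofinitely_sensitive_iff_sensitive_with using \<open>0 < \<delta>\<close> by blast
next
  assume "cofinitely_sensitive (SFn n X) (rho X) (SFnf X f)"
  then obtain \<delta> N where "0 < \<delta>" "sensitive_with (SFn n X) (rho X) (SFnf X f) \<delta> N"
    by (auto simp: cofinitely_sensitive_iff_sensitive_with)
  then have "sensitive_with (Fn n X) dH (Fnf f) \<delta> N"
    using sensitive_with_of_SFn assms(2,5,6) by simp
  then show "cofinitely_sensitive (Fn n X) dH (Fnf f)"
    unfolding cofinitely_sensitive_iff_sensitive_with using \<open>0 < \<delta>\<close> by blast
qed

end
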